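(* Let $m\ge 2$ be an integer and consider a preferential (dynamic) attachment circuit of index $m$. Let $Y_n^{(0)}$ and $Y_n^{(1)}$ be the numbers of nodes of outdegree $0$ and of outdegree $1$ in the circuit after $n$ insertions. Then for every $n\ge 1$, $$\mathbb{E}[Y_n^{(0)}]=\frac{(m+1)n+m}{2m+1},\qquad \mathbb{E}[Y_n^{(1)}]=\frac{(m+1)(n-1)\bigl((2m^2+2m)n+2m^2+m+1\bigr)}{2(3m+1)(2m+1)\bigl((m+1)n-1\bigr)},$$ and consequently, as $n\to\infty$, $\mathbb{E}[Y_n^{(0)}]\sim \frac{m+1}{2m+1}\,n$ and $\mathbb{E}[Y_n^{(1)}]\sim \frac{m(m+1)}{(3m+1)(2m+1)}\,n$.
   Context: Preferential (dynamic) attachment circuit of index $m\ge1$: at time $0$ there is a single node labeled $0$. At each time $n\ge1$ a new node labeled $n$ is added and $m$ parents are chosen for it one at a time, with replacement, among nodes $0,\dots,n-1$. Before the $(i+1)$-th choice ($i=0,\dots,m-1$), each existing node $v$ is chosen with probability $\frac{d_i(v)+1}{\sum_{x}(d_i(x)+1)}$, where $d_i(x)$ is the outdegree of $x$ in the current multigraph, which already includes the edges created by the first $i$ choices for node $n$; after each choice an edge from the chosen parent to node $n$ is immediately added (multiple edges between the same pair are allowed and counted with multiplicity). The outdegree of a node is the number of edges (with multiplicity) going to nodes with larger labels. *)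

theory Defs
  imports "HOL-Probability.Probability" "HOL-Library.Landau_Symbols"
begin

text \<open>A circuit is represented by its multiset of edges (parent, child).
  Multiple edges are allowed and counted with multiplicity.\<close>
type_synonym circuit = "(nat \<times> nat) multiset"

definition outdeg :: "circuit \<Rightarrow> nat \<Rightarrow> nat" where
  "outdeg E v = size (filter_mset (\<lambda>e. fst e = v) E)"

definition choose_parent :: "nat \<Rightarrow> circuit \<Rightarrow> nat pmf" where
  "choose_parent k E =
     pmf_of_multiset (\<Sum>v<k. replicate_mset (outdeg E v + 1) v)"

fun add_edges :: "nat \<Rightarrow> nat \<Rightarrow> circuit \<Rightarrow> circuit pmf" where
  "add_edges 0 k E = return_pmf E"
| "add_edges (Suc i) k E =
     bind_pmf (choose_parent k E) (\<lambda>v. add_edges i k (add_mset (v, k) E))"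

text \<open>Distribution of the circuit of index m after n insertions
  (nodes 0,...,n).\<close>
fun pa_circuit :: "nat \<Rightarrow> nat \<Rightarrow> circuit pmf" where
  "pa_circuit m 0 = return_pmf {#}"
| "pa_circuit m (Suc n) = bind_pmf (pa_circuit m n) (add_edges m (Suc n))"

definition num_outdeg :: "nat \<Rightarrow> nat \<Rightarrow> circuit \<Rightarrow> nat" where
  "num_outdeg d n E = card {v. v \<le> n \<and> outdeg E v = d}"

definition EY :: "nat \<Rightarrow> nat \<Rightarrow> nat \<Rightarrow> real" where
  "EY m d n = measure_pmf.expectation (pa_circuit m n) (\<lambda>E. real (num_outdeg d n E))"

end

theory Submission
  imports Defs
begin

text \<open>Call \<open>outdeg E v + 1\<close> the weight of \<open>v\<close>; while the new node \<open>k\<close> receives its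
  edges, the total weight \<open>T\<close> of the old nodes grows by one per edge, and a node of
  outdegree \<open>d\<close> is hit with probability \<open>(d + 1) / T\<close>. So one choice turns the numbers
  \<open>c\<^sub>0, c\<^sub>1\<close> of old nodes of outdegree 0 and 1 into \<open>c\<^sub>0 (T - 1) / T\<close> and
  \<open>(c\<^sub>1 (T - 2) + c\<^sub>0) / T\<close> in expectation, and the products over the \<open>m\<close> choices
  telescope. After \<open>n\<close> insertions \<open>T = (m + 1) n + 1\<close> holds deterministically, so the
  expectations obey first-order linear recurrences in \<open>n\<close>, solved by the closed forms.\<close>

definition count_outdeg :: "nat \<Rightarrow> nat \<Rightarrow> circuit \<Rightarrow> real" where
  "count_outdeg d k E = (\<Sum>v<k. of_bool (outdeg E v = d))"

definition total_weight :: "nat \<Rightarrow> circuit \<Rightarrow> real" where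
  "total_weight k E = (\<Sum>v<k. real (outdeg E v) + 1)"

definition parent_weights :: "nat \<Rightarrow> circuit \<Rightarrow> nat multiset" where
  "parent_weights k E = (\<Sum>v<k. replicate_mset (outdeg E v + 1) v)"

lemma choose_parent_eq_pmf_of_multiset: "choose_parent k E = pmf_of_multiset (parent_weights k E)"
  by (simp only: choose_parent_def parent_weights_def)

lemma outdeg_add_mset: "outdeg (add_mset e E) v = outdeg E v + of_bool (fst e = v)"
  by (simp add: outdeg_def)

lemma outdeg_eq_0_iff: "outdeg E v = 0 \<longleftrightarrow> (\<forall>e\<in>#E. fst e \<noteq> v)"
  by (auto simp: outdeg_def)

lemma count_outdeg_add_edge:
  assumes "v < k"
  shows "count_outdeg d k (add_mset (v, k) E)
           = count_outdeg d k E + of_bool (outdeg E v + 1 = d) - of_bool (outdeg E v = d)"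
proof -
  have "of_bool (outdeg (add_mset (v, k) E) w = d) = of_bool (outdeg E w = d)
          + (if w = v then of_bool (outdeg E v + 1 = d) - of_bool (outdeg E v = d) else 0 :: real)"
    for w by (simp add: outdeg_add_mset)
  then show ?thesis
    using assms by (simp add: count_outdeg_def sum.distrib)
qed

lemma total_weight_add_edge:
  assumes "v < k"
  shows "total_weight k (add_mset (v, k) E) = total_weight k E + 1"
proof -
  have "real (outdeg (add_mset (v, k) E) w) + 1 = (real (outdeg E w) + 1) + (if w = v then 1 else 0)"
    for w by (simp add: outdeg_add_mset)
  then show ?thesis
    using assms by (simp add: total_weight_def sum.distrib)
qed

lemma total_weight_pos: "0 < k \<Longrightarrow> 0 < total_weight k E"
  unfolding total_weight_def by (intro sum_pos) auto

lemma size_parent_weights: "real (size (parent_weights k E)) = total_weight k E"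
  unfolding parent_weights_def total_weight_def by (induction k) auto

lemma count_parent_weights: "v < k \<Longrightarrow> count (parent_weights k E) v = outdeg E v + 1"
  unfolding parent_weights_def count_sum
  by (simp add: count_replicate_mset if_distrib cong: if_cong)

lemma set_mset_parent_weights: "set_mset (parent_weights k E) \<subseteq> {..<k}"
  unfolding parent_weights_def by (induction k) auto

lemma parent_weights_nonempty: "0 < k \<Longrightarrow> parent_weights k E \<noteq> {#}"
  using size_parent_weights[of k E] total_weight_pos[of k E] by auto

lemma pmf_choose_parent:
  "v < k \<Longrightarrow> pmf (choose_parent k E) v = (real (outdeg E v) + 1) / total_weight k E"
  using parent_weights_nonempty[of k E] size_parent_weights[of k E] count_parent_weights[of v k E]
  by (simp add: choose_parent_eq_pmf_of_multiset)

lemma set_pmf_choose_parent: "0 < k \<Longrightarrow> set_pmf (choose_parent k E) \<subseteq> {..<k}"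
  using parent_weights_nonempty[of k E] set_mset_parent_weights[of k E]
  by (simp add: choose_parent_eq_pmf_of_multiset)

lemma finite_set_pmf_add_edges: "0 < k \<Longrightarrow> finite (set_pmf (add_edges i k E))"
proof (induction i arbitrary: E)
  case (Suc i)
  then show ?case
    using set_pmf_choose_parent[of k E] by (auto intro: finite_subset)
qed simp

lemma set_pmf_add_edges:
  assumes "0 < k" "x \<in> set_pmf (add_edges i k E)"
  shows "\<exists>F. x = E + F \<and> size F = i \<and> (\<forall>e\<in>#F. fst e < k \<and> snd e = k)"
  using assms(2)
proof (induction i arbitrary: E)
  case (Suc i)
  then obtain v where v: "v \<in> set_pmf (choose_parent k E)"
    and x: "x \<in> set_pmf (add_edges i k (add_mset (v, k) E))"
    by auto
  have "v < k"
    using v set_pmf_choose_parent[OF assms(1)] by auto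
  obtain F where "x = add_mset (v, k) E + F" "size F = i" "\<forall>e\<in>#F. fst e < k \<and> snd e = k"
    using Suc.IH[OF x] by blast
  with \<open>v < k\<close> show ?case
    by (intro exI[of _ "add_mset (v, k) F"]) auto
qed simp

lemma expectation_bind_pmf_finite:
  fixes h :: "'b \<Rightarrow> 'c::{banach, second_countable_topology}"
  assumes "finite (set_pmf p)" "\<And>x. x \<in> set_pmf p \<Longrightarrow> finite (set_pmf (f x))"
  shows "measure_pmf.expectation (bind_pmf p f) h
           = measure_pmf.expectation p (\<lambda>x. measure_pmf.expectation (f x) h)"
  using assms
  by (subst pmf_expectation_bind[where A = "set_pmf p"]) (auto simp: integral_measure_pmf[of "set_pmf p"])

lemma expectation_add_edges_Suc:
  fixes h :: "circuit \<Rightarrow> real"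
  assumes "0 < k"
  shows "measure_pmf.expectation (add_edges (Suc i) k E) h
           = (\<Sum>v<k. (real (outdeg E v) + 1) * measure_pmf.expectation (add_edges i k (add_mset (v, k) E)) h)
             / total_weight k E"
  using assms
  by (simp add: pmf_expectation_bind[where A = "{..<k}"] finite_set_pmf_add_edges
      set_pmf_choose_parent pmf_choose_parent sum_divide_distrib)

lemma weighted_sum_of_outdeg_eq:
  "(\<Sum>v<k. (real (outdeg E v) + 1) * of_bool (outdeg E v = d)) = (real d + 1) * count_outdeg d k E"
  unfolding count_outdeg_def sum_distrib_left by (intro sum.cong) auto

lemma weighted_count_outdeg_add_edge:
  "(\<Sum>v<k. (real (outdeg E v) + 1) * count_outdeg d k (add_mset (v, k) E))
     = count_outdeg d k E * (total_weight k E - (real d + 1))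
       + (\<Sum>v<k. (real (outdeg E v) + 1) * of_bool (outdeg E v + 1 = d))"
proof -
  have "(\<Sum>v<k. (real (outdeg E v) + 1) * count_outdeg d k (add_mset (v, k) E))
     = (\<Sum>v<k. (real (outdeg E v) + 1) * count_outdeg d k E
          + (real (outdeg E v) + 1) * of_bool (outdeg E v + 1 = d)
          - (real (outdeg E v) + 1) * of_bool (outdeg E v = d))"
    by (intro sum.cong refl) (simp add: count_outdeg_add_edge algebra_simps)
  also have "\<dots> = total_weight k E * count_outdeg d k E
       + (\<Sum>v<k. (real (outdeg E v) + 1) * of_bool (outdeg E v + 1 = d))
       - (real d + 1) * count_outdeg d k E"
    by (simp only: sum_subtractf sum.distrib weighted_sum_of_outdeg_eq total_weight_def
        sum_distrib_right[symmetric])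
  finally show ?thesis
    by (simp add: algebra_simps)
qed

lemma weighted_count_outdeg_0_add_edge:
  "(\<Sum>v<k. (real (outdeg E v) + 1) * count_outdeg 0 k (add_mset (v, k) E))
     = count_outdeg 0 k E * (total_weight k E - 1)"
  by (simp add: weighted_count_outdeg_add_edge)

lemma weighted_count_outdeg_Suc_add_edge:
  "(\<Sum>v<k. (real (outdeg E v) + 1) * count_outdeg (Suc d) k (add_mset (v, k) E))
     = count_outdeg (Suc d) k E * (total_weight k E - (real d + 2)) + (real d + 1) * count_outdeg d k E"
  unfolding weighted_count_outdeg_add_edge using weighted_sum_of_outdeg_eq[of E d k]
  by (simp add: algebra_simps)

lemma expectation_add_edges_count_outdeg_0:
  assumes "0 < k"
  shows "measure_pmf.expectation (add_edges i k E) (count_outdeg 0 k) * (total_weight k E + real i - 1)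
           = count_outdeg 0 k E * (total_weight k E - 1)"
proof (induction i arbitrary: E)
  case (Suc i)
  define T where "T = total_weight k E"
  let ?X = "\<lambda>v. measure_pmf.expectation (add_edges i k (add_mset (v, k) E)) (count_outdeg 0 k)"
  have IH: "?X v * (T + real i) = count_outdeg 0 k (add_mset (v, k) E) * T" if "v < k" for v
    using Suc.IH[of "add_mset (v, k) E"] total_weight_add_edge[OF that, of E]
    by (simp add: T_def algebra_simps)
  have "measure_pmf.expectation (add_edges (Suc i) k E) (count_outdeg 0 k) * (T + real (Suc i) - 1)
     = (\<Sum>v<k. (real (outdeg E v) + 1) * (?X v * (T + real i))) / T"
    unfolding expectation_add_edges_Suc[OF assms]
    by (simp add: T_def sum_divide_distrib sum_distrib_left mult_ac)
  also have "\<dots> = (\<Sum>v<k. (real (outdeg E v) + 1) * count_outdeg 0 k (add_mset (v, k) E) * T) / T"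
    by (intro arg_cong[where f = "\<lambda>x. x / T"] sum.cong) (simp_all add: IH)
  also have "\<dots> = (\<Sum>v<k. (real (outdeg E v) + 1) * count_outdeg 0 k (add_mset (v, k) E))"
    using total_weight_pos[OF assms, of E] by (simp add: T_def flip: sum_distrib_right)
  also have "\<dots> = count_outdeg 0 k E * (T - 1)"
    by (simp add: weighted_count_outdeg_0_add_edge T_def)
  finally show ?case
    by (simp add: T_def)
qed simp

lemma expectation_add_edges_count_outdeg_1:
  assumes "0 < k"
  shows "measure_pmf.expectation (add_edges i k E) (count_outdeg 1 k)
           * (total_weight k E + real i - 1) * (total_weight k E + real i - 2)
         = count_outdeg 1 k E * (total_weight k E - 1) * (total_weight k E - 2)
           + real i * count_outdeg 0 k E * (total_weight k E - 1)"
proof (induction i arbitrary: E)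
  case (Suc i)
  define T where "T = total_weight k E"
  let ?X = "\<lambda>v. measure_pmf.expectation (add_edges i k (add_mset (v, k) E)) (count_outdeg 1 k)"
  let ?c = "\<lambda>d v. count_outdeg d k (add_mset (v, k) E)"
  have IH: "?X v * ((T + real i) * (T + real i - 1)) = (?c 1 v * (T - 1) + real i * ?c 0 v) * T"
    if "v < k" for v
  proof -
    have T': "total_weight k (add_mset (v, k) E) = T + 1"
      using total_weight_add_edge[OF that] by (simp add: T_def)
    show ?thesis
      using Suc.IH[of "add_mset (v, k) E"] unfolding T' by (simp add: algebra_simps)
  qed
  have "measure_pmf.expectation (add_edges (Suc i) k E) (count_outdeg 1 k)
          * (T + real (Suc i) - 1) * (T + real (Suc i) - 2)
     = (\<Sum>v<k. (real (outdeg E v) + 1) * (?X v * ((T + real i) * (T + real i - 1)))) / T"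
    unfolding expectation_add_edges_Suc[OF assms]
    by (simp add: T_def sum_divide_distrib sum_distrib_left mult_ac)
  also have "\<dots> = (\<Sum>v<k. (real (outdeg E v) + 1) * (?c 1 v * (T - 1) + real i * ?c 0 v) * T) / T"
    by (intro arg_cong[where f = "\<lambda>x. x / T"] sum.cong refl) (use IH in \<open>simp add: mult.assoc\<close>)
  also have "\<dots> = (\<Sum>v<k. (real (outdeg E v) + 1) * (?c 1 v * (T - 1) + real i * ?c 0 v))"
    using total_weight_pos[OF assms, of E] by (simp add: T_def flip: sum_distrib_right)
  also have "\<dots> = (\<Sum>v<k. (real (outdeg E v) + 1) * ?c 1 v) * (T - 1)
                  + real i * (\<Sum>v<k. (real (outdeg E v) + 1) * ?c 0 v)"
    by (simp add: sum.distrib sum_distrib_left sum_distrib_right distrib_left mult_ac)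
  also have "\<dots> = count_outdeg 1 k E * (T - 1) * (T - 2) + real (Suc i) * count_outdeg 0 k E * (T - 1)"
    unfolding weighted_count_outdeg_Suc_add_edge[where d = 0, folded One_nat_def]
      weighted_count_outdeg_0_add_edge
    by (simp add: T_def algebra_simps)
  finally show ?case
    by (simp add: T_def)
qed simp

lemma finite_set_pmf_pa_circuit: "finite (set_pmf (pa_circuit m n))"
  by (induction n) (auto simp: finite_set_pmf_add_edges)

lemma set_pmf_pa_circuit:
  "E \<in> set_pmf (pa_circuit m n) \<Longrightarrow> size E = m * n \<and> (\<forall>e\<in>#E. fst e < snd e \<and> snd e \<le> n)"
proof (induction n arbitrary: E)
  case (Suc n)
  then obtain F where F: "F \<in> set_pmf (pa_circuit m n)" and E: "E \<in> set_pmf (add_edges m (Suc n) F)"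
    by auto
  from set_pmf_add_edges[OF _ E] Suc.IH[OF F] show ?case
    by fastforce
qed simp

lemma sum_outdeg_eq_size: "(\<forall>e\<in>#E. fst e < k) \<Longrightarrow> (\<Sum>v<k. outdeg E v) = size E"
proof (induction E)
  case (add e E)
  then show ?case
    by (simp add: outdeg_add_mset sum.distrib of_bool_def)
qed (simp add: outdeg_def)

lemma total_weight_pa_circuit:
  assumes "E \<in> set_pmf (pa_circuit m n)"
  shows "total_weight (Suc n) E = (real m + 1) * real n + 1"
proof -
  have "(\<Sum>v<Suc n. outdeg E v) = m * n"
    using set_pmf_pa_circuit[OF assms] by (subst sum_outdeg_eq_size) auto
  then have "(\<Sum>v<Suc n. real (outdeg E v)) = real m * real n"
    by (metis of_nat_mult of_nat_sum)
  then show ?thesis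
    by (simp add: total_weight_def sum.distrib algebra_simps)
qed

lemma outdeg_new_node:
  assumes "E \<in> set_pmf (pa_circuit m n)" "x \<in> set_pmf (add_edges i (Suc n) E)"
  shows "outdeg x (Suc n) = 0"
proof -
  obtain F where "x = E + F" "\<forall>e\<in>#F. fst e < Suc n"
    using set_pmf_add_edges[OF _ assms(2)] by auto
  with set_pmf_pa_circuit[OF assms(1)] show ?thesis
    by (fastforce simp: outdeg_eq_0_iff)
qed

lemma num_outdeg_eq_count_outdeg: "real (num_outdeg d n E) = count_outdeg d (Suc n) E"
proof -
  have "{v. v \<le> n \<and> outdeg E v = d} = {..<Suc n} \<inter> {v. outdeg E v = d}"
    by auto
  moreover have "(\<Sum>v<Suc n. of_bool (outdeg E v = d)) = real (card ({..<Suc n} \<inter> {v. outdeg E v = d}))"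
    by (rule sum_of_bool_eq) auto
  ultimately show ?thesis
    unfolding num_outdeg_def count_outdeg_def by simp
qed

lemma measure_pmf_expectation_cong:
  "(\<And>x. x \<in> set_pmf p \<Longrightarrow> f x = g x) \<Longrightarrow> measure_pmf.expectation p f = measure_pmf.expectation p g"
  by (auto intro: integral_cong_AE simp: AE_measure_pmf_iff)

text \<open>The term \<open>of_bool (d = 0)\<close> is the contribution of the node \<open>Suc n\<close> just inserted,
  whose outdegree is still 0.\<close>

lemma EY_Suc:
  "EY m d (Suc n) = measure_pmf.expectation (pa_circuit m n)
     (\<lambda>E. measure_pmf.expectation (add_edges m (Suc n) E) (count_outdeg d (Suc n)) + of_bool (d = 0))"
proof -
  have inner: "measure_pmf.expectation (add_edges m (Suc n) E) (\<lambda>x. real (num_outdeg d (Suc n) x))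
     = measure_pmf.expectation (add_edges m (Suc n) E) (count_outdeg d (Suc n)) + of_bool (d = 0)"
    if E: "E \<in> set_pmf (pa_circuit m n)" for E
  proof -
    have "measure_pmf.expectation (add_edges m (Suc n) E) (\<lambda>x. real (num_outdeg d (Suc n) x))
       = measure_pmf.expectation (add_edges m (Suc n) E) (\<lambda>x. count_outdeg d (Suc n) x + of_bool (d = 0))"
      using outdeg_new_node[OF E]
      by (intro measure_pmf_expectation_cong) (simp add: num_outdeg_eq_count_outdeg count_outdeg_def)
    then show ?thesis
      by (simp add: integrable_measure_pmf_finite finite_set_pmf_add_edges)
  qed
  have "EY m d (Suc n) = measure_pmf.expectation (pa_circuit m n)
      (\<lambda>E. measure_pmf.expectation (add_edges m (Suc n) E) (\<lambda>x. real (num_outdeg d (Suc n) x)))"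
    unfolding EY_def pa_circuit.simps
    by (intro expectation_bind_pmf_finite finite_set_pmf_pa_circuit finite_set_pmf_add_edges) simp
  also have "\<dots> = measure_pmf.expectation (pa_circuit m n)
     (\<lambda>E. measure_pmf.expectation (add_edges m (Suc n) E) (count_outdeg d (Suc n)) + of_bool (d = 0))"
    by (intro measure_pmf_expectation_cong inner)
  finally show ?thesis .
qed

lemma EY_0_Suc:
  assumes "1 \<le> m"
  shows "EY m 0 (Suc n) = EY m 0 n * ((real m + 1) * real n) / ((real m + 1) * real n + real m) + 1"
proof -
  have pos: "(real m + 1) * real n + real m > 0"
    using assms by (simp add: add_nonneg_pos)
  have inner: "measure_pmf.expectation (add_edges m (Suc n) E) (count_outdeg 0 (Suc n))
      = real (num_outdeg 0 n E) * ((real m + 1) * real n) / ((real m + 1) * real n + real m)"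
    if "E \<in> set_pmf (pa_circuit m n)" for E
    using expectation_add_edges_count_outdeg_0[of "Suc n" m E] total_weight_pa_circuit[OF that] pos
    by (simp add: num_outdeg_eq_count_outdeg field_simps)
  have "EY m 0 (Suc n) = measure_pmf.expectation (pa_circuit m n)
      (\<lambda>E. real (num_outdeg 0 n E) * ((real m + 1) * real n) / ((real m + 1) * real n + real m) + 1)"
    unfolding EY_Suc by (intro measure_pmf_expectation_cong) (simp add: inner)
  then show ?thesis
    by (simp add: EY_def integrable_measure_pmf_finite finite_set_pmf_pa_circuit)
qed

lemma EY_1_Suc:
  assumes "2 \<le> m"
  shows "EY m 1 (Suc n) = (EY m 1 n * ((real m + 1) * real n * ((real m + 1) * real n - 1))
            + EY m 0 n * (real m * ((real m + 1) * real n)))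
          / (((real m + 1) * real n + real m) * ((real m + 1) * real n + real m - 1))"
proof -
  define a where "a = (real m + 1) * real n"
  define D where "D = (a + real m) * (a + real m - 1)"
  have "a \<ge> 0"
    by (simp add: a_def)
  then have "D > 0"
    using assms unfolding D_def by (intro mult_pos_pos) linarith+
  have inner: "measure_pmf.expectation (add_edges m (Suc n) E) (count_outdeg 1 (Suc n))
      = (real (num_outdeg 1 n E) * (a * (a - 1)) + real (num_outdeg 0 n E) * (real m * a)) / D"
    if "E \<in> set_pmf (pa_circuit m n)" for E
    using expectation_add_edges_count_outdeg_1[of "Suc n" m E] total_weight_pa_circuit[OF that] \<open>D > 0\<close>
    by (simp add: num_outdeg_eq_count_outdeg field_simps a_def D_def)
  have "EY m 1 (Suc n) = measure_pmf.expectation (pa_circuit m n)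
      (\<lambda>E. real (num_outdeg 1 n E) * (a * (a - 1) / D) + real (num_outdeg 0 n E) * (real m * a / D))"
    unfolding EY_Suc using inner by (intro measure_pmf_expectation_cong) (simp add: add_divide_distrib)
  also have "\<dots> = EY m 1 n * (a * (a - 1) / D) + EY m 0 n * (real m * a / D)"
    by (simp add: EY_def integrable_measure_pmf_finite finite_set_pmf_pa_circuit)
  finally show ?thesis
    by (simp add: a_def D_def add_divide_distrib)
qed

lemma EY_0_eq:
  assumes "1 \<le> m" "1 \<le> n"
  shows "EY m 0 n = ((real m + 1) * real n + real m) / (2 * real m + 1)"
  using assms(2)
proof (induction n rule: dec_induct)
  case base
  then show ?case
    using EY_0_Suc[OF assms(1), of 0] by (simp add: field_simps)
next
  case (step n)
  define a where "a = (real m + 1) * real n"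
  have "a + real m > 0"
    using assms(1) by (simp add: a_def add_nonneg_pos)
  have "EY m 0 (Suc n) = (a + real m) / (2 * real m + 1) * a / (a + real m) + 1"
    using EY_0_Suc[OF assms(1), of n] step.IH by (simp add: a_def)
  also have "\<dots> = a / (2 * real m + 1) + 1"
    using \<open>a + real m > 0\<close> by simp
  also have "\<dots> = (a + 2 * real m + 1) / (2 * real m + 1)"
    by (simp add: field_simps)
  finally show ?case
    by (simp add: a_def algebra_simps)
qed

lemma EY_1_eq:
  assumes "2 \<le> m" "1 \<le> n"
  shows "EY m 1 n = (real m + 1) * (real n - 1)
                 * ((2 * (real m)^2 + 2 * real m) * real n + 2 * (real m)^2 + real m + 1)
                 / (2 * (3 * real m + 1) * (2 * real m + 1) * ((real m + 1) * real n - 1))"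
  using assms(2)
proof (induction n rule: dec_induct)
  case base
  then show ?case
    using EY_1_Suc[OF assms(1), of 0] by simp
next
  case (step n)
  define M x where "M = real m" and "x = real n"
  define a P Q K where "a = (M + 1) * x" and "P = 2 * M^2 + 2 * M" and "Q = 2 * M^2 + M + 1"
    and "K = 2 * (3 * M + 1) * (2 * M + 1)"
  have "a \<ge> M + 1"
    using step.hyps by (simp add: a_def M_def x_def)
  then have "a - 1 > 0" "a + M - 1 > 0" "K > 0"
    using assms(1) by (simp_all add: M_def K_def)
  have IH: "EY m 1 n * (a * (a - 1)) = (M + 1) * (x - 1) * (P * x + Q) * a / K"
    using step.IH \<open>a - 1 > 0\<close> by (simp add: M_def x_def a_def P_def Q_def K_def power2_eq_square)
  have e0: "EY m 0 n * (M * a) = 2 * (3 * M + 1) * (a + M) * M * a / K"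
    using EY_0_eq[of m n] step.hyps assms(1) by (simp add: M_def x_def a_def K_def)
  have poly: "(M + 1) * (x - 1) * (P * x + Q) * a + 2 * (3 * M + 1) * (a + M) * M * a
      = (M + 1) * x * (P * (x + 1) + Q) * (a + M - 1)"
    by (simp add: a_def P_def Q_def algebra_simps power2_eq_square)
  have "EY m 1 (Suc n) = (EY m 1 n * (a * (a - 1)) + EY m 0 n * (M * a)) / ((a + M) * (a + M - 1))"
    using EY_1_Suc[OF assms(1), of n] by (simp only: M_def x_def a_def)
  also have "\<dots> = (M + 1) * x * (P * (x + 1) + Q) * (a + M - 1) / K / ((a + M) * (a + M - 1))"
    by (simp only: IH e0 poly flip: add_divide_distrib)
  also have "\<dots> = (M + 1) * x * (P * (x + 1) + Q) / (K * (a + M))"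
    using \<open>a + M - 1 > 0\<close> by simp
  also have "\<dots> = (M + 1) * x * (P * (x + 1) + Q) / (K * ((M + 1) * (x + 1) - 1))"
    by (simp add: a_def algebra_simps)
  finally show ?case
    by (simp add: M_def x_def P_def Q_def K_def algebra_simps)
qed

lemma asymp_equiv_affine:
  fixes a b :: real
  assumes "a \<noteq> 0"
  shows "(\<lambda>n. a * real n + b) \<sim>[at_top] (\<lambda>n. a * real n)"
proof (rule asymp_equivI')
  have "(\<lambda>n. 1 + (b / a) / real n) \<longlonglongrightarrow> 1 + 0"
    by (intro tendsto_add tendsto_const lim_const_over_n)
  moreover have "eventually (\<lambda>n. 1 + (b / a) / real n = (a * real n + b) / (a * real n)) at_top"
    using eventually_ge_at_top[of "1::nat"] by eventually_elim (use assms in \<open>simp add: field_simps\<close>)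
  ultimately show "(\<lambda>n. (a * real n + b) / (a * real n)) \<longlonglongrightarrow> 1"
    by (simp add: Lim_transform_eventually)
qed

lemma EY_0_asymp_equiv:
  assumes "1 \<le> m"
  shows "(\<lambda>n. EY m 0 n) \<sim>[at_top] (\<lambda>n. (real m + 1) / (2 * real m + 1) * real n)"
proof -
  have "(\<lambda>n. EY m 0 n) \<sim>[at_top] (\<lambda>n. (real m + 1) / (2 * real m + 1) * real n + real m / (2 * real m + 1))"
    by (intro asymp_equiv_refl_ev eventually_mono[OF eventually_ge_at_top[of 1]])
      (simp add: EY_0_eq[OF assms] divide_simps add_pos_pos)
  also have "\<dots> \<sim>[at_top] (\<lambda>n. (real m + 1) / (2 * real m + 1) * real n)"
    by (intro asymp_equiv_affine) (simp add: add_nonneg_pos)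
  finally show ?thesis .
qed

lemma EY_1_asymp_equiv:
  assumes "2 \<le> m"
  shows "(\<lambda>n. EY m 1 n) \<sim>[at_top] (\<lambda>n. real m * (real m + 1) / ((3 * real m + 1) * (2 * real m + 1)) * real n)"
proof -
  define M where "M = real m"
  define c P Q where "c = (M + 1) / (2 * (3 * M + 1) * (2 * M + 1))"
    and "P = 2 * M^2 + 2 * M" and "Q = 2 * M^2 + M + 1"
  have "M \<ge> 2"
    using assms by (simp add: M_def)
  then have "P > 0"
    by (simp add: P_def add_pos_pos)
  have "(\<lambda>n. EY m 1 n) \<sim>[at_top] (\<lambda>n. c * ((1 * real n + (-1)) * (P * real n + Q) / ((M + 1) * real n + (-1))))"
    by (intro asymp_equiv_refl_ev eventually_mono[OF eventually_ge_at_top[of 1]])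
      (use EY_1_eq[OF assms] in \<open>simp add: M_def c_def P_def Q_def\<close>)
  also have "\<dots> \<sim>[at_top] (\<lambda>n. c * ((1 * real n) * (P * real n) / ((M + 1) * real n)))"
    using \<open>M \<ge> 2\<close> \<open>P > 0\<close>
    by (intro asymp_equiv_mult asymp_equiv_divide asymp_equiv_refl asymp_equiv_affine) simp_all
  also have "\<dots> \<sim>[at_top] (\<lambda>n. M * (M + 1) / ((3 * M + 1) * (2 * M + 1)) * real n)"
  proof (intro asymp_equiv_refl_ev, use eventually_ge_at_top[of 1] in eventually_elim)
    case (elim n)
    then have "(M + 1) * real n \<noteq> 0"
      using \<open>M \<ge> 2\<close> by simp
    then have "c * ((1 * real n) * (P * real n) / ((M + 1) * real n)) = c * (2 * M * real n)"
      by (simp add: P_def field_simps power2_eq_square)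
    also have "\<dots> = M * (M + 1) / ((3 * M + 1) * (2 * M + 1)) * real n"
    proof -
      have "2 * (3 * M + 1) * (2 * M + 1) \<noteq> 0" "(3 * M + 1) * (2 * M + 1) \<noteq> 0"
        using \<open>M \<ge> 2\<close> by auto
      then show ?thesis
        unfolding c_def times_divide_eq_left by (subst frac_eq_eq) (simp_all add: algebra_simps)
    qed
    finally show ?case .
  qed
  finally show ?thesis
    by (simp add: M_def)
qed

theorem proposition1:
  fixes m :: nat
  assumes "m \<ge> 2"
  shows "(\<forall>n\<ge>1. EY m 0 n = ((real m + 1) * real n + real m) / (2 * real m + 1)
            \<and> EY m 1 n = (real m + 1) * (real n - 1)
                 * ((2 * (real m)^2 + 2 * real m) * real n + 2 * (real m)^2 + real m + 1)
                 / (2 * (3 * real m + 1) * (2 * real m + 1) * ((real m + 1) * real n - 1)))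
       \<and> (\<lambda>n. EY m 0 n) \<sim>[at_top] (\<lambda>n. (real m + 1) / (2 * real m + 1) * real n)
       \<and> (\<lambda>n. EY m 1 n) \<sim>[at_top]
            (\<lambda>n. real m * (real m + 1) / ((3 * real m + 1) * (2 * real m + 1)) * real n)"
proof -
  have "m \<ge> 1"
    using assms by simp
  then show ?thesis
    using EY_0_eq EY_1_eq[OF assms] EY_0_asymp_equiv EY_1_asymp_equiv[OF assms] by blast
qed

end
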